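(* Let $\mathcal{X}=\{1,\dots,n\}$, let $\pi$ be a strictly positive probability distribution on $\mathcal{X}$ and let $P$ be a $\pi$-reversible transition matrix. For every $S\subset\mathcal{X}$ with $S\neq\emptyset,\mathcal{X}$ (and $S'=\mathcal{X}\setminus S$), $$g(S):=\frac{1}{\pi(S)\pi(S')}\sum_{x\in S,\,y\in S'}\pi(x)P(x,y)=f_1(S)-f_2(S)-f_3(S),$$ where $f_1(S)=\frac{1}{\pi(S)\pi(S')}-2$, $f_2(S)=\frac{1}{\pi(S)}\sum_{x,y\in S'}\pi(x)P(x,y)$, $f_3(S)=\frac{1}{\pi(S')}\sum_{x,y\in S}\pi(x)P(x,y)$; moreover each of $f_1,f_2,f_3$ is supermodular on $\{S\subseteq\mathcal{X}:0<\pi(S)<1\}$.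
   Context: $\pi$-reversible means $\pi(x)P(x,y)=\pi(y)P(y,x)$. A set function $f$ is submodular if $f(A\cap B)+f(A\cup B)\le f(A)+f(B)$ for all $A,B$ in its domain, and supermodular if $-f$ is submodular. *)

theory Defs
  imports Complex_Main
begin

definition state_space :: "nat \<Rightarrow> nat set" where
  "state_space n = {1..n}"

definition pos_prob_dist :: "nat \<Rightarrow> (nat \<Rightarrow> real) \<Rightarrow> bool" where
  "pos_prob_dist n \<pi> \<longleftrightarrow> (\<forall>x\<in>state_space n. \<pi> x > 0) \<and> (\<Sum>x\<in>state_space n. \<pi> x) = 1"

definition transition_matrix :: "nat \<Rightarrow> (nat \<Rightarrow> nat \<Rightarrow> real) \<Rightarrow> bool" where
  "transition_matrix n P \<longleftrightarrow>
     (\<forall>x\<in>state_space n. \<forall>y\<in>state_space n. P x y \<ge> 0) \<and>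
     (\<forall>x\<in>state_space n. (\<Sum>y\<in>state_space n. P x y) = 1)"

definition reversible :: "nat \<Rightarrow> (nat \<Rightarrow> real) \<Rightarrow> (nat \<Rightarrow> nat \<Rightarrow> real) \<Rightarrow> bool" where
  "reversible n \<pi> P \<longleftrightarrow> (\<forall>x\<in>state_space n. \<forall>y\<in>state_space n. \<pi> x * P x y = \<pi> y * P y x)"

definition pmeas :: "(nat \<Rightarrow> real) \<Rightarrow> nat set \<Rightarrow> real" where
  "pmeas \<pi> S = (\<Sum>x\<in>S. \<pi> x)"

definition flow :: "(nat \<Rightarrow> real) \<Rightarrow> (nat \<Rightarrow> nat \<Rightarrow> real) \<Rightarrow> nat set \<Rightarrow> nat set \<Rightarrow> real" where
  "flow \<pi> P A B = (\<Sum>x\<in>A. \<Sum>y\<in>B. \<pi> x * P x y)"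

definition g_fun :: "nat \<Rightarrow> (nat \<Rightarrow> real) \<Rightarrow> (nat \<Rightarrow> nat \<Rightarrow> real) \<Rightarrow> nat set \<Rightarrow> real" where
  "g_fun n \<pi> P S = flow \<pi> P S (state_space n - S) /
      (pmeas \<pi> S * pmeas \<pi> (state_space n - S))"

definition f1 :: "nat \<Rightarrow> (nat \<Rightarrow> real) \<Rightarrow> nat set \<Rightarrow> real" where
  "f1 n \<pi> S = 1 / (pmeas \<pi> S * pmeas \<pi> (state_space n - S)) - 2"

definition f2 :: "nat \<Rightarrow> (nat \<Rightarrow> real) \<Rightarrow> (nat \<Rightarrow> nat \<Rightarrow> real) \<Rightarrow> nat set \<Rightarrow> real" where
  "f2 n \<pi> P S = flow \<pi> P (state_space n - S) (state_space n - S) / pmeas \<pi> S"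

definition f3 :: "nat \<Rightarrow> (nat \<Rightarrow> real) \<Rightarrow> (nat \<Rightarrow> nat \<Rightarrow> real) \<Rightarrow> nat set \<Rightarrow> real" where
  "f3 n \<pi> P S = flow \<pi> P S S / pmeas \<pi> (state_space n - S)"

definition supermodular_on :: "'a set set \<Rightarrow> ('a set \<Rightarrow> real) \<Rightarrow> bool" where
  "supermodular_on D f \<longleftrightarrow>
     (\<forall>A\<in>D. \<forall>B\<in>D. A \<inter> B \<in> D \<longrightarrow> A \<union> B \<in> D \<longrightarrow> f A + f B \<le> f (A \<inter> B) + f (A \<union> B))"

definition good_sets :: "nat \<Rightarrow> (nat \<Rightarrow> real) \<Rightarrow> nat set set" where
  "good_sets n \<pi> = {S. S \<subseteq> state_space n \<and> 0 < pmeas \<pi> S \<and> pmeas \<pi> S < 1}"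

end

theory Submission
  imports Defs
begin

text \<open>Write F for the flow from S to its complement S'. Since the rows of P sum to one and
  reversibility makes the flow from S' to S equal to F, the flows inside S and inside S' are
  \<pi>(S) - F and \<pi>(S') - F; the decomposition of g is then an identity of rational functions.

  Each of f1, f2, f3 is a ratio q(S) / d(S), possibly composed with S \<mapsto> S',
  where d is modular and antitone and q is nonnegative, monotone and supermodular: for f3,
  q(S) is the weight of S \<times> S and d(S) = \<pi>(S'); f2 is f3 of the complement; and
  f1 = 1/\<pi>(S') + 1/\<pi>(S) - 2. For such ratios, passing from A, B to A \<inter> B, A \<union> B spreads
  the denominators apart with the same sum and moves the larger numerator onto the smaller
  denominator, which can only increase the sum by convexity of t \<mapsto> 1/t.\<close>

lemma reciprocal_sum_le_of_spread:
  fixes x y a b :: real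
  assumes "0 < x" "x \<le> a" "x \<le> b" "a + b = x + y"
  shows "1 / a + 1 / b \<le> 1 / x + 1 / y"
proof -
  have pos: "0 < a" "0 < b" "0 < y"
    using assms by linarith+
  have "0 \<le> (a - x) * (b - x)"
    using assms by simp
  also have "\<dots> = a * b - x * y"
  proof -
    have y: "y = a + b - x"
      using assms(4) by simp
    show ?thesis
      unfolding y by (simp add: algebra_simps)
  qed
  finally have "x * y \<le> a * b"
    by simp
  then have "(a + b) / (a * b) \<le> (x + y) / (x * y)"
    using assms pos by (simp add: frac_le)
  then show ?thesis
    using assms pos by (simp add: field_simps)
qed

lemma ratio_sum_le_of_spread:
  fixes x y a b p qa qb r :: real
  assumes "0 < x" "x \<le> a" "x \<le> b" "a + b = x + y"
    and "0 \<le> p" "p \<le> qa" "p \<le> qb" "qa + qb \<le> p + r"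
  shows "qa / a + qb / b \<le> r / x + p / y"
proof -
  have pos: "0 < a" "0 < b" "0 < y"
    using assms by linarith+
  have "qa / a + qb / b = p * (1 / a + 1 / b) + (qa - p) / a + (qb - p) / b"
    using pos by (simp add: field_simps)
  also have "\<dots> \<le> p * (1 / x + 1 / y) + (qa - p) / x + (qb - p) / x"
  proof -
    have "p * (1 / a + 1 / b) \<le> p * (1 / x + 1 / y)"
      using reciprocal_sum_le_of_spread[OF assms(1-4)] assms(5) by (rule mult_left_mono)
    moreover have "(qa - p) / a \<le> (qa - p) / x" "(qb - p) / b \<le> (qb - p) / x"
      using assms by (simp_all add: divide_left_mono)
    ultimately show ?thesis
      by linarith
  qed
  also have "\<dots> = (qa + qb - p) / x + p / y"
    using assms(1) pos by (simp add: field_simps)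
  also have "\<dots> \<le> r / x + p / y"
    using assms by (simp add: divide_right_mono)
  finally show ?thesis .
qed

lemma conductance_identity:
  fixes a F :: real
  assumes "0 < a" "0 < 1 - a"
  shows "F / (a * (1 - a)) = 1 / (a * (1 - a)) - 2 - ((1 - a) - F) / a - (a - F) / (1 - a)"
proof -
  have "1 / (a * (1 - a)) - 2 - ((1 - a) - F) / a - (a - F) / (1 - a)
      = (1 - 2 * (a * (1 - a)) - ((1 - a) - F) * (1 - a) - (a - F) * a) / (a * (1 - a))"
    using assms by (simp add: diff_divide_distrib add_divide_distrib)
  also have "1 - 2 * (a * (1 - a)) - ((1 - a) - F) * (1 - a) - (a - F) * a = F"
    by (simp add: algebra_simps)
  finally show ?thesis
    by simp
qed

lemma supermodular_on_cong:
  assumes "supermodular_on D g" "\<And>S. S \<in> D \<Longrightarrow> f S = g S"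
  shows "supermodular_on D f"
  using assms unfolding supermodular_on_def by simp

lemma supermodular_on_add:
  assumes "supermodular_on D f" "supermodular_on D g"
  shows "supermodular_on D (\<lambda>S. f S + g S)"
  using assms unfolding supermodular_on_def by (smt (verit))

lemma supermodular_on_diff_const:
  assumes "supermodular_on D f"
  shows "supermodular_on D (\<lambda>S. f S - c)"
  using assms unfolding supermodular_on_def by auto

lemma supermodular_on_compl:
  assumes "supermodular_on D f" "\<And>S. S \<in> D \<Longrightarrow> X - S \<in> D"
  shows "supermodular_on D (\<lambda>S. f (X - S))"
  unfolding supermodular_on_def
proof (intro ballI impI)
  fix A B assume "A \<in> D" "B \<in> D" "A \<inter> B \<in> D" "A \<union> B \<in> D"
  moreover have "(X - A) \<inter> (X - B) = X - (A \<union> B)" "(X - A) \<union> (X - B) = X - (A \<inter> B)"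
    by auto
  ultimately show "f (X - A) + f (X - B) \<le> f (X - (A \<inter> B)) + f (X - (A \<union> B))"
    using assms unfolding supermodular_on_def by (metis add.commute)
qed

lemma supermodular_on_divide:
  fixes q d :: "'a set \<Rightarrow> real"
  assumes "D \<subseteq> Pow X"
    and d_pos: "\<And>S. S \<in> D \<Longrightarrow> 0 < d S"
    and d_modular: "\<And>A B. A \<subseteq> X \<Longrightarrow> B \<subseteq> X \<Longrightarrow> d A + d B = d (A \<inter> B) + d (A \<union> B)"
    and d_antimono: "\<And>A B. A \<subseteq> B \<Longrightarrow> B \<subseteq> X \<Longrightarrow> d B \<le> d A"
    and q_nonneg: "\<And>S. S \<subseteq> X \<Longrightarrow> 0 \<le> q S"
    and q_mono: "\<And>A B. A \<subseteq> B \<Longrightarrow> B \<subseteq> X \<Longrightarrow> q A \<le> q B"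
    and q_supermodular: "\<And>A B. A \<subseteq> X \<Longrightarrow> B \<subseteq> X \<Longrightarrow> q A + q B \<le> q (A \<inter> B) + q (A \<union> B)"
  shows "supermodular_on D (\<lambda>S. q S / d S)"
  unfolding supermodular_on_def
proof (intro ballI impI)
  fix A B assume "A \<in> D" "B \<in> D" "A \<inter> B \<in> D" "A \<union> B \<in> D"
  then have AB: "A \<subseteq> X" "B \<subseteq> X" "A \<union> B \<subseteq> X"
    using assms(1) by auto
  have "q A / d A + q B / d B \<le> q (A \<union> B) / d (A \<union> B) + q (A \<inter> B) / d (A \<inter> B)"
  proof (rule ratio_sum_le_of_spread)
    show "0 < d (A \<union> B)"
      using d_pos \<open>A \<union> B \<in> D\<close> .
    show "d (A \<union> B) \<le> d A" "d (A \<union> B) \<le> d B"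
      using AB by (auto intro: d_antimono)
    show "d A + d B = d (A \<union> B) + d (A \<inter> B)"
      using d_modular[OF AB(1,2)] by simp
    show "0 \<le> q (A \<inter> B)"
      using AB by (auto intro: q_nonneg)
    show "q (A \<inter> B) \<le> q A" "q (A \<inter> B) \<le> q B"
      using AB by (auto intro: q_mono)
    show "q A + q B \<le> q (A \<inter> B) + q (A \<union> B)"
      using q_supermodular[OF AB(1,2)] .
  qed
  then show "q A / d A + q B / d B \<le> q (A \<inter> B) / d (A \<inter> B) + q (A \<union> B) / d (A \<union> B)"
    by simp
qed

lemma sum_square_supermodular:
  fixes w :: "'a \<times> 'a \<Rightarrow> real"
  assumes "finite A" "finite B" "\<And>z. z \<in> (A \<union> B) \<times> (A \<union> B) \<Longrightarrow> 0 \<le> w z"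
  shows "sum w (A \<times> A) + sum w (B \<times> B) \<le> sum w ((A \<inter> B) \<times> (A \<inter> B)) + sum w ((A \<union> B) \<times> (A \<union> B))"
proof -
  have "sum w (A \<times> A) + sum w (B \<times> B) = sum w (A \<times> A \<union> B \<times> B) + sum w (A \<times> A \<inter> B \<times> B)"
    using assms by (simp add: sum.union_inter)
  also have "A \<times> A \<inter> B \<times> B = (A \<inter> B) \<times> (A \<inter> B)"
    by auto
  also have "sum w (A \<times> A \<union> B \<times> B) \<le> sum w ((A \<union> B) \<times> (A \<union> B))"
    using assms by (intro sum_mono2) auto
  finally show ?thesis
    by simp
qed

lemma pmeas_union_inter:
  "finite A \<Longrightarrow> finite B \<Longrightarrow> pmeas \<pi> A + pmeas \<pi> B = pmeas \<pi> (A \<inter> B) + pmeas \<pi> (A \<union> B)"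
  unfolding pmeas_def by (metis add.commute sum.union_inter)

lemma pmeas_mono:
  assumes "finite B" "A \<subseteq> B" "\<And>x. x \<in> B \<Longrightarrow> 0 \<le> \<pi> x"
  shows "pmeas \<pi> A \<le> pmeas \<pi> B"
  unfolding pmeas_def using assms by (intro sum_mono2) auto

lemma pmeas_diff:
  "finite X \<Longrightarrow> S \<subseteq> X \<Longrightarrow> pmeas \<pi> (X - S) = pmeas \<pi> X - pmeas \<pi> S"
  unfolding pmeas_def by (simp add: sum_diff)

lemma flow_square:
  "flow \<pi> P T T = (\<Sum>(x, y)\<in>T \<times> T. \<pi> x * P x y)"
  unfolding flow_def by (simp add: sum.cartesian_product)

lemma flow_add_flow_diff:
  assumes "finite X" "T \<subseteq> X" "\<And>x. x \<in> T \<Longrightarrow> (\<Sum>y\<in>X. P x y) = 1"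
  shows "flow \<pi> P T T + flow \<pi> P T (X - T) = pmeas \<pi> T"
proof -
  have "flow \<pi> P T T + flow \<pi> P T (X - T) = (\<Sum>x\<in>T. \<Sum>y\<in>X. \<pi> x * P x y)"
    unfolding flow_def sum.distrib[symmetric]
    using assms by (intro sum.cong refl) (metis Diff_partition Diff_disjoint finite_Diff
        finite_subset sum.union_disjoint)
  also have "\<dots> = pmeas \<pi> T"
    using assms by (simp add: pmeas_def sum_distrib_left[symmetric])
  finally show ?thesis .
qed

lemma flow_swap:
  assumes "A \<subseteq> X" "B \<subseteq> X" "\<And>x y. x \<in> X \<Longrightarrow> y \<in> X \<Longrightarrow> \<pi> x * P x y = \<pi> y * P y x"
  shows "flow \<pi> P A B = flow \<pi> P B A"
  unfolding flow_def
  by (subst sum.swap) (use assms in \<open>auto intro!: sum.cong\<close>)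

lemma finite_state_space [simp]: "finite (state_space n)"
  by (simp add: state_space_def)

lemma pmeas_diff_state_space:
  "pos_prob_dist n \<pi> \<Longrightarrow> S \<subseteq> state_space n \<Longrightarrow> pmeas \<pi> (state_space n - S) = 1 - pmeas \<pi> S"
  using pmeas_diff[of "state_space n" S \<pi>] by (simp add: pos_prob_dist_def pmeas_def)

lemma g_fun_eq_f1_f2_f3:
  assumes "pos_prob_dist n \<pi>" "transition_matrix n P" "reversible n \<pi> P"
    and S: "S \<subseteq> state_space n" "S \<noteq> {}" "S \<noteq> state_space n"
  shows "g_fun n \<pi> P S = f1 n \<pi> S - f2 n \<pi> P S - f3 n \<pi> P S"
proof -
  define X where "X = state_space n"
  define a where "a = pmeas \<pi> S"
  define F where "F = flow \<pi> P S (X - S)"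
  have X: "finite X" "S \<subseteq> X" "X - S \<subseteq> X" "X - (X - S) = S" "X - S \<noteq> {}"
    using S by (auto simp: X_def)
  have \<pi>_pos: "\<And>x. x \<in> X \<Longrightarrow> 0 < \<pi> x"
    using assms(1) by (simp add: pos_prob_dist_def X_def)
  have rows: "\<And>x. x \<in> X \<Longrightarrow> (\<Sum>y\<in>X. P x y) = 1"
    using assms(2) by (simp add: transition_matrix_def X_def)
  have rev: "\<And>x y. x \<in> X \<Longrightarrow> y \<in> X \<Longrightarrow> \<pi> x * P x y = \<pi> y * P y x"
    using assms(3) by (simp add: reversible_def X_def)
  have compl: "pmeas \<pi> (X - S) = 1 - a"
    using pmeas_diff_state_space[OF assms(1) S(1)] by (simp add: X_def a_def)
  have "0 < pmeas \<pi> S" "0 < pmeas \<pi> (X - S)"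
    unfolding pmeas_def using X S(2) \<pi>_pos by (auto intro!: sum_pos intro: finite_subset)
  then have a: "0 < a" "0 < 1 - a"
    using compl a_def by auto
  have "flow \<pi> P S S + F = a"
    unfolding F_def a_def using X rows by (intro flow_add_flow_diff) auto
  moreover have "flow \<pi> P (X - S) (X - S) + F = 1 - a"
  proof -
    have "flow \<pi> P (X - S) S = F"
      unfolding F_def using X rev by (intro flow_swap) auto
    then show ?thesis
      using flow_add_flow_diff[of X "X - S" P \<pi>] X rows compl by auto
  qed
  ultimately have inner_flows: "flow \<pi> P S S = a - F" "flow \<pi> P (X - S) (X - S) = (1 - a) - F"
    by simp_all
  have "g_fun n \<pi> P S = F / (a * (1 - a))"
    by (simp add: g_fun_def X_def[symmetric] F_def[symmetric] a_def[symmetric] compl)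
  also have "\<dots> = 1 / (a * (1 - a)) - 2 - ((1 - a) - F) / a - (a - F) / (1 - a)"
    using a by (rule conductance_identity)
  also have "\<dots> = f1 n \<pi> S - f2 n \<pi> P S - f3 n \<pi> P S"
    by (simp add: f1_def f2_def f3_def X_def[symmetric] a_def[symmetric] compl inner_flows)
  finally show ?thesis .
qed

lemma diff_in_good_sets:
  "pos_prob_dist n \<pi> \<Longrightarrow> S \<in> good_sets n \<pi> \<Longrightarrow> state_space n - S \<in> good_sets n \<pi>"
  by (auto simp: good_sets_def pmeas_diff_state_space)

lemma supermodular_on_divide_pmeas_diff:
  fixes q :: "nat set \<Rightarrow> real"
  assumes "pos_prob_dist n \<pi>"
    and "\<And>S. S \<subseteq> state_space n \<Longrightarrow> 0 \<le> q S"
    and "\<And>A B. A \<subseteq> B \<Longrightarrow> B \<subseteq> state_space n \<Longrightarrow> q A \<le> q B"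
    and "\<And>A B. A \<subseteq> state_space n \<Longrightarrow> B \<subseteq> state_space n \<Longrightarrow>
           q A + q B \<le> q (A \<inter> B) + q (A \<union> B)"
  shows "supermodular_on (good_sets n \<pi>) (\<lambda>S. q S / pmeas \<pi> (state_space n - S))"
proof (rule supermodular_on_divide[where X = "state_space n"])
  let ?X = "state_space n"
  have \<pi>_nonneg: "\<And>x. x \<in> ?X \<Longrightarrow> 0 \<le> \<pi> x"
    using assms(1) by (auto simp: pos_prob_dist_def less_imp_le)
  show "good_sets n \<pi> \<subseteq> Pow ?X"
    by (auto simp: good_sets_def)
  show "0 < pmeas \<pi> (?X - S)" if "S \<in> good_sets n \<pi>" for S
    using that assms(1) by (simp add: good_sets_def pmeas_diff_state_space)
  show "pmeas \<pi> (?X - A) + pmeas \<pi> (?X - B) = pmeas \<pi> (?X - A \<inter> B) + pmeas \<pi> (?X - (A \<union> B))"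
    for A B
    using pmeas_union_inter[of "?X - A" "?X - B" \<pi>] by (simp add: Diff_Int Diff_Un)
  show "pmeas \<pi> (?X - B) \<le> pmeas \<pi> (?X - A)" if "A \<subseteq> B" for A B
    using that \<pi>_nonneg by (intro pmeas_mono) auto
qed (use assms in auto)

lemma supermodular_on_f3:
  assumes "pos_prob_dist n \<pi>" "transition_matrix n P"
  shows "supermodular_on (good_sets n \<pi>) (f3 n \<pi> P)"
proof -
  let ?X = "state_space n"
  have w_nonneg: "0 \<le> \<pi> x * P x y" if "x \<in> ?X" "y \<in> ?X" for x y
    using that assms by (auto simp: pos_prob_dist_def transition_matrix_def less_imp_le)
  have "supermodular_on (good_sets n \<pi>) (\<lambda>S. flow \<pi> P S S / pmeas \<pi> (?X - S))"
  proof (rule supermodular_on_divide_pmeas_diff[OF assms(1)])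
    show "0 \<le> flow \<pi> P S S" if "S \<subseteq> ?X" for S
      unfolding flow_def using that w_nonneg by (auto intro!: sum_nonneg)
    show "flow \<pi> P A A \<le> flow \<pi> P B B" if "A \<subseteq> B" "B \<subseteq> ?X" for A B
    proof -
      have "finite B"
        using that finite_state_space finite_subset by blast+
      moreover have "0 \<le> \<pi> x * P x y" if "x \<in> B" "y \<in> B" for x y
        using that \<open>B \<subseteq> ?X\<close> w_nonneg by blast
      ultimately show ?thesis
        unfolding flow_square using \<open>A \<subseteq> B\<close> by (intro sum_mono2) auto
    qed
    show "flow \<pi> P A A + flow \<pi> P B B \<le> flow \<pi> P (A \<inter> B) (A \<inter> B) + flow \<pi> P (A \<union> B) (A \<union> B)"
      if "A \<subseteq> ?X" "B \<subseteq> ?X" for A B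
    proof -
      have "finite A" "finite B"
        using that finite_state_space finite_subset by blast+
      then show ?thesis
        unfolding flow_square using that by (intro sum_square_supermodular) (auto intro: w_nonneg)
    qed
  qed
  then show ?thesis
    unfolding f3_def .
qed

lemma supermodular_on_f2:
  assumes "pos_prob_dist n \<pi>" "transition_matrix n P"
  shows "supermodular_on (good_sets n \<pi>) (f2 n \<pi> P)"
proof -
  have "supermodular_on (good_sets n \<pi>) (\<lambda>S. f3 n \<pi> P (state_space n - S))"
    using supermodular_on_f3[OF assms] diff_in_good_sets[OF assms(1)]
    by (rule supermodular_on_compl)
  moreover have "f2 n \<pi> P S = f3 n \<pi> P (state_space n - S)" if "S \<in> good_sets n \<pi>" for S
    using that by (simp add: f2_def f3_def good_sets_def double_diff)
  ultimately show ?thesis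
    by (rule supermodular_on_cong)
qed

lemma supermodular_on_f1:
  assumes "pos_prob_dist n \<pi>"
  shows "supermodular_on (good_sets n \<pi>) (f1 n \<pi>)"
proof -
  let ?X = "state_space n"
  let ?h = "\<lambda>S. 1 / pmeas \<pi> (?X - S)"
  have "supermodular_on (good_sets n \<pi>) ?h"
    using supermodular_on_divide_pmeas_diff[OF assms, where q = "\<lambda>_. 1"] by simp
  moreover have "supermodular_on (good_sets n \<pi>) (\<lambda>S. ?h (?X - S))"
    using calculation diff_in_good_sets[OF assms] by (rule supermodular_on_compl)
  ultimately have "supermodular_on (good_sets n \<pi>) (\<lambda>S. ?h S + ?h (?X - S) - 2)"
    by (intro supermodular_on_diff_const supermodular_on_add)
  moreover have "f1 n \<pi> S = ?h S + ?h (?X - S) - 2" if "S \<in> good_sets n \<pi>" for S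
  proof -
    have "S \<subseteq> ?X" "0 < pmeas \<pi> S" "pmeas \<pi> S < 1"
      using that by (auto simp: good_sets_def)
    then show ?thesis
      using assms by (simp add: f1_def pmeas_diff_state_space double_diff field_simps)
  qed
  ultimately show ?thesis
    by (rule supermodular_on_cong)
qed

theorem proposition4p13:
  fixes n :: nat and \<pi> :: "nat \<Rightarrow> real" and P :: "nat \<Rightarrow> nat \<Rightarrow> real"
  assumes "pos_prob_dist n \<pi>"
    and "transition_matrix n P"
    and "reversible n \<pi> P"
  shows "(\<forall>S. S \<subseteq> state_space n \<and> S \<noteq> {} \<and> S \<noteq> state_space n \<longrightarrow>
            g_fun n \<pi> P S = f1 n \<pi> S - f2 n \<pi> P S - f3 n \<pi> P S)
         \<and> supermodular_on (good_sets n \<pi>) (f1 n \<pi>)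
         \<and> supermodular_on (good_sets n \<pi>) (f2 n \<pi> P)
         \<and> supermodular_on (good_sets n \<pi>) (f3 n \<pi> P)"
  using g_fun_eq_f1_f2_f3[OF assms] supermodular_on_f1[OF assms(1)]
    supermodular_on_f2[OF assms(1,2)] supermodular_on_f3[OF assms(1,2)]
  by simp

end
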